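(* Let $n\in\mathbb{N}$ and consider the equation $q_nx^n+\cdots+q_1x+q_0=0$ in the unknown $x\in\mathbb{H}$, with $q_n\neq 0$. (a) Suppose all $q_i$ are real, and the solution set of the equation in $\mathbb{C}$ is $\{\xi_1,\ldots,\xi_s,\zeta_1,\overline{\zeta_1},\ldots,\zeta_t,\overline{\zeta_t}\}$, where $\xi_1,\ldots,\xi_s$ are distinct real numbers and $\zeta_1,\ldots,\zeta_t$ are distinct nonreal complex numbers. Then the solution set in $\mathbb{H}$ is $\{\xi_1,\ldots,\xi_s\}\cup[\zeta_1]\cup\cdots\cup[\zeta_t]$. (b) More generally, suppose all $q_i$ are complex numbers and the solution set of the equation in $\mathbb{C}$ is $\{\xi_1,\ldots,\xi_s,\eta_1,\ldots,\eta_k,\zeta_1,\overline{\zeta_1},\ldots,\zeta_t,\overline{\zeta_t}\}$, where $\xi_1,\ldots,\xi_s$ are distinct real numbers, $\eta_1,\ldots,\eta_k,\zeta_1,\ldots,\zeta_t$ are distinct nonreal complex numbers, and no $\overline{\eta_i}$ is a root of the equation. Then the solution set in $\mathbb{H}$ is $\{\xi_1,\ldots,\xi_s,\eta_1,\ldots,\eta_k\}\cup[\zeta_1]\cup\cdots\cup[\zeta_t]$. (c) Let $p_1,\ldots,p_n\in\mathbb{H}$ with $p_n\neq0$, $d_0\in\{0,1\}$, and let $f_1,f_2,\bar f_1,\bar f_2$ be the derived polynomials of the equation $p_nx^n+\cdots+p_1x+d_0=0$. Then this equation has only finitely many solutions in $\mathbb{H}$ if and only if the complex polynomial $\gcd(f_1,f_2,\bar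 f_1,\bar f_2)$ has no nonreal complex root, if and only if the complex polynomial $\gcd(f_1,f_2)$ has no pair of nonreal conjugate complex roots (i.e., there is no nonreal $c\in\mathbb{C}$ with $c$ and $\bar c$ both roots of $\gcd(f_1,f_2)$).
   Context: $\mathbb{H}$ denotes the real quaternions with units $\mathbf{i},\mathbf{j},\mathbf{k}$, and $\mathbb{C}=\mathbb{R}\oplus\mathbb{R}\mathbf{i}\subset\mathbb{H}$. For $q\in\mathbb{H}$, $[q]=\{aqa^{-1}:a\in\mathbb{H},a\neq0\}$. Derived polynomials: writing $p_i=t_1^{(i)}+t_2^{(i)}\mathbf{j}$ with $t_1^{(i)},t_2^{(i)}\in\mathbb{C}$, set $f_1(t)=t_1^{(n)}t^n+\cdots+t_1^{(1)}t+d_0$, $f_2(t)=t_2^{(n)}t^n+\cdots+t_2^{(1)}t$, $\bar f_1(t)=\overline{t_1^{(n)}}t^n+\cdots+\overline{t_1^{(1)}}t+d_0$, $\bar f_2(t)=\overline{t_2^{(n)}}t^n+\cdots+\overline{t_2^{(1)}}t$, regarded as polynomials in $\mathbb{C}[t]$. *)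

theory Defs
  imports "HOL-Analysis.Analysis" "HOL-Computational_Algebra.Polynomial_Factorial" "HOL-Computational_Algebra.Field_as_Ring"
begin

text \<open>Real quaternions, represented in Cayley--Dickson form q = z1 + z2 j with z1, z2 complex
  (C = R + R i inside H).  Multiplication: (a + b j)(c + d j) = (a c - b cnj d) + (a d + b cnj c) j.\<close>

datatype quat = Quat (qfst: complex) (qsnd: complex)

lemma quat_eq_iff: "x = y \<longleftrightarrow> qfst x = qfst y \<and> qsnd x = qsnd y"
  by (cases x; cases y) auto

instantiation quat :: division_ring
begin
definition "0 = Quat 0 0"
definition "1 = Quat 1 0"
definition "x + y = Quat (qfst x + qfst y) (qsnd x + qsnd y)"
definition "x - y = Quat (qfst x - qfst y) (qsnd x - qsnd y)"
definition "- x = Quat (- qfst x) (- qsnd x)"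
definition "x * y = Quat (qfst x * qfst y - qsnd x * cnj (qsnd y))
                         (qfst x * qsnd y + qsnd x * cnj (qfst y))"
definition "inverse x = (let r = complex_of_real ((cmod (qfst x))\<^sup>2 + (cmod (qsnd x))\<^sup>2)
                         in Quat (cnj (qfst x) / r) (- qsnd x / r))"
definition "x div (y::quat) = x * inverse y"
instance
proof
  fix a b c :: quat
  show "a * b * c = a * (b * c)"
    by (simp add: times_quat_def algebra_simps)
  show "(a + b) * c = a * c + b * c"
    by (simp add: times_quat_def plus_quat_def algebra_simps)
  show "a * (b + c) = a * b + a * c"
    by (simp add: times_quat_def plus_quat_def algebra_simps)
  show "a + b + c = a + (b + c)" by (simp add: plus_quat_def algebra_simps)
  show "a + b = b + a" by (simp add: plus_quat_def algebra_simps)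
  show "0 + a = a" by (simp add: plus_quat_def zero_quat_def)
  show "- a + a = 0" by (simp add: plus_quat_def zero_quat_def uminus_quat_def)
  show "a - b = a + - b" by (simp add: plus_quat_def minus_quat_def uminus_quat_def)
  show "1 * a = a" by (simp add: times_quat_def one_quat_def)
  show "a * 1 = a" by (simp add: times_quat_def one_quat_def)
  show "(0::quat) \<noteq> 1" by (simp add: zero_quat_def one_quat_def)
  show "a div b = a * inverse b" by (simp add: divide_quat_def)
  show "inverse (0::quat) = 0" by (simp add: inverse_quat_def zero_quat_def)
next
  fix a :: quat
  assume "a \<noteq> 0"
  define A where "A = qfst a"
  define B where "B = qsnd a"
  define r where "r = complex_of_real ((cmod A)\<^sup>2 + (cmod B)\<^sup>2)"
  have nz: "(cmod A)\<^sup>2 + (cmod B)\<^sup>2 \<noteq> 0"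
    using \<open>a \<noteq> 0\<close> unfolding A_def B_def
    by (cases a) (auto simp: zero_quat_def add_nonneg_eq_0_iff)
  then have rnz: "r \<noteq> 0" unfolding r_def of_real_eq_0_iff by blast
  have rr: "A * cnj A + B * cnj B = r"
    unfolding r_def using complex_norm_square[of A] complex_norm_square[of B] by simp
  have cr: "cnj r = r" unfolding r_def by simp
  have inv: "inverse a = Quat (cnj A / r) (- B / r)"
    by (simp add: inverse_quat_def A_def B_def r_def Let_def)
  show "inverse a * a = 1"
  proof -
    have "cnj A / r * A - (- B / r) * cnj B = 1"
      using rr rnz by (simp add: field_simps mult.commute)
    moreover have "cnj A / r * B + (- B / r) * cnj A = 0"
      by (simp add: field_simps mult.commute)
    ultimately show ?thesis
      by (simp add: inv times_quat_def one_quat_def A_def B_def)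
  qed
  show "a * inverse a = 1"
  proof -
    have "A * (cnj A / r) - B * cnj (- B / r) = 1"
      using rr rnz cr by (simp add: field_simps)
    moreover have "A * (- B / r) + B * cnj (cnj A / r) = 0"
      using cr by (simp add: field_simps mult.commute)
    ultimately show ?thesis
      by (simp add: inv times_quat_def one_quat_def A_def B_def)
  qed
qed
end

definition of_cplx :: "complex \<Rightarrow> quat" where
  "of_cplx z = Quat z 0"

definition conjclass :: "quat \<Rightarrow> quat set" where
  "conjclass q = {a * q * inverse a | a. a \<noteq> 0}"

definition qeval :: "complex poly \<Rightarrow> quat \<Rightarrow> quat" where
  "qeval p x = (\<Sum>i\<le>degree p. of_cplx (coeff p i) * x ^ i)"

definition derived_f1 :: "nat \<Rightarrow> (nat \<Rightarrow> quat) \<Rightarrow> real \<Rightarrow> complex poly" where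
  "derived_f1 n p d0 = (\<Sum>i=1..n. monom (qfst (p i)) i) + [:complex_of_real d0:]"
definition derived_f2 :: "nat \<Rightarrow> (nat \<Rightarrow> quat) \<Rightarrow> complex poly" where
  "derived_f2 n p = (\<Sum>i=1..n. monom (qsnd (p i)) i)"
definition derived_f1bar :: "nat \<Rightarrow> (nat \<Rightarrow> quat) \<Rightarrow> real \<Rightarrow> complex poly" where
  "derived_f1bar n p d0 = (\<Sum>i=1..n. monom (cnj (qfst (p i))) i) + [:complex_of_real d0:]"
definition derived_f2bar :: "nat \<Rightarrow> (nat \<Rightarrow> quat) \<Rightarrow> complex poly" where
  "derived_f2bar n p = (\<Sum>i=1..n. monom (cnj (qsnd (p i))) i)"

end

theory Submission
  imports Defs
begin

text \<open>
  Every quaternion is \<open>x = a + b I\<close> with \<open>a, b\<close> real, \<open>b \<ge> 0\<close> and \<open>I * I = -1\<close>; put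
  \<open>z = a + b \<i>\<close>.  As \<open>a\<close> and \<open>b\<close> are central, a polynomial \<open>P\<close> with coefficients on the
  left satisfies \<open>P (a + b I) = U + V I\<close> with quaternions \<open>U, V\<close> depending only on \<open>z\<close>, and
  \<open>I = \<plusminus>\<i>\<close> gives \<open>P z = U + V \<i>\<close> and \<open>P (cnj z) = U - V \<i>\<close>.  If \<open>z\<close> and \<open>cnj z\<close> are
  both roots, then \<open>U = V = 0\<close> and the whole class \<open>[z] = {a + b I | I * I = -1}\<close> consists of
  roots; it is infinite unless \<open>z\<close> is real.  Otherwise \<open>V \<noteq> 0\<close> and \<open>I = - V\<^sup>-\<^sup>1 U\<close> is
  determined by \<open>z\<close>; for complex coefficients this \<open>I\<close> is complex, so the root is complex.
  Finally, the \<open>z\<close> of every root is a root of the nonzero complex polynomial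
  \<open>f\<^sub>1 f\<^sub>1\<^sup>* + f\<^sub>2 f\<^sub>2\<^sup>*\<close> built from the derived polynomials, so there are only finitely many
  roots unless some nonreal \<open>z\<close> has \<open>z\<close> and \<open>cnj z\<close> both roots.
\<close>

lemma quat_sel_simps [simp]:
  "qfst (x + y) = qfst x + qfst y" "qsnd (x + y) = qsnd x + qsnd y"
  "qfst (x - y) = qfst x - qfst y" "qsnd (x - y) = qsnd x - qsnd y"
  "qfst (- x) = - qfst x" "qsnd (- x) = - qsnd x"
  "qfst (x * y) = qfst x * qfst y - qsnd x * cnj (qsnd y)"
  "qsnd (x * y) = qfst x * qsnd y + qsnd x * cnj (qfst y)"
  "qfst 0 = 0" "qsnd 0 = 0" "qfst 1 = 1" "qsnd 1 = 0"
  by (simp_all add: plus_quat_def minus_quat_def uminus_quat_def times_quat_def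
      zero_quat_def one_quat_def)

lemma qfst_sum: "qfst (sum f S) = (\<Sum>i\<in>S. qfst (f i))"
  by (induct S rule: infinite_finite_induct) auto

lemma qsnd_sum: "qsnd (sum f S) = (\<Sum>i\<in>S. qsnd (f i))"
  by (induct S rule: infinite_finite_induct) auto

lemma of_cplx_sel [simp]: "qfst (of_cplx z) = z" "qsnd (of_cplx z) = 0"
  by (simp_all add: of_cplx_def)

lemma of_cplx_eq_iff [simp]: "of_cplx a = of_cplx b \<longleftrightarrow> a = b"
  by (simp add: quat_eq_iff)

lemma of_cplx_simps [simp]:
  "of_cplx 0 = 0" "of_cplx 1 = 1" "of_cplx (- a) = - of_cplx a"
  "of_cplx (a + b) = of_cplx a + of_cplx b" "of_cplx (a * b) = of_cplx a * of_cplx b"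
  by (simp_all add: quat_eq_iff)

lemma of_cplx_eq_0_iff [simp]: "of_cplx a = 0 \<longleftrightarrow> a = 0"
  by (simp add: quat_eq_iff)

lemma of_cplx_power: "of_cplx (z ^ k) = of_cplx z ^ k"
  by (induct k) simp_all

lemma of_cplx_sum: "of_cplx (sum f S) = (\<Sum>i\<in>S. of_cplx (f i))"
  by (simp add: quat_eq_iff qfst_sum qsnd_sum)

lemma of_cplx_i_sq: "of_cplx \<i> * of_cplx \<i> = -1"
  by (simp add: quat_eq_iff)

lemma of_cplx_inverse: "of_cplx (inverse z) = inverse (of_cplx z)"
proof (cases "z = 0")
  case False
  then have "of_cplx z * of_cplx (inverse z) = 1"
    by (simp flip: of_cplx_simps)
  then show ?thesis
    by (simp add: inverse_unique)
qed simp

section \<open>Copies of the complex numbers in the quaternions\<close>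

definition quat_of_real :: "real \<Rightarrow> quat" where
  "quat_of_real r = of_cplx (of_real r)"

lemma quat_of_real_sel [simp]:
  "qfst (quat_of_real r) = of_real r" "qsnd (quat_of_real r) = 0"
  by (simp_all add: quat_of_real_def)

lemma quat_of_real_commute: "quat_of_real r * x = x * quat_of_real r"
  by (simp add: quat_eq_iff)

text \<open>For \<open>I * I = -1\<close> this is the embedding of \<open>\<complex>\<close> into the quaternions sending \<open>\<i>\<close> to \<open>I\<close>.\<close>
definition cplx_along :: "quat \<Rightarrow> complex \<Rightarrow> quat" where
  "cplx_along I z = quat_of_real (Re z) + quat_of_real (Im z) * I"

lemma cplx_along_of_cplx:
  "cplx_along (of_cplx u) z = of_cplx (of_real (Re z) + of_real (Im z) * u)"
  by (simp add: cplx_along_def quat_of_real_def)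

lemma cplx_along_i: "cplx_along (of_cplx \<i>) z = of_cplx z"
  by (simp add: quat_eq_iff cplx_along_def complex_eq_iff)

lemma cplx_along_minus_i: "cplx_along (- of_cplx \<i>) z = of_cplx (cnj z)"
  by (simp add: quat_eq_iff cplx_along_def complex_eq_iff)

lemma cplx_along_cnj: "cplx_along I (cnj z) = cplx_along (- I) z"
  by (simp add: cplx_along_def quat_of_real_def)

lemma cplx_along_real: "Im z = 0 \<Longrightarrow> cplx_along I z = quat_of_real (Re z)"
  by (simp add: cplx_along_def quat_of_real_def)

lemma cplx_along_conj:
  assumes "h \<noteq> 0"
  shows "cplx_along (h * of_cplx \<i> * inverse h) z = h * of_cplx z * inverse h"
proof -
  have "h * of_cplx z * inverse h = h * cplx_along (of_cplx \<i>) z * inverse h"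
    by (simp add: cplx_along_i)
  also have "\<dots> = quat_of_real (Re z) * (h * inverse h)
                  + quat_of_real (Im z) * (h * of_cplx \<i> * inverse h)"
    by (simp add: cplx_along_def algebra_simps quat_of_real_commute)
  finally show ?thesis
    using assms by (simp add: cplx_along_def)
qed

lemma power_conj:
  fixes h y :: "'a::division_ring"
  assumes "h \<noteq> 0"
  shows "(h * y * inverse h) ^ k = h * y ^ k * inverse h"
proof (induct k)
  case (Suc k)
  have "(h * y * inverse h) ^ Suc k = h * y ^ k * inverse h * (h * y * inverse h)"
    by (simp only: power_Suc2 Suc)
  also have "\<dots> = h * y ^ k * (inverse h * h) * y * inverse h"
    by (simp only: mult.assoc)
  also have "\<dots> = h * y ^ Suc k * inverse h"
    unfolding left_inverse[OF assms] by (simp only: mult_1_right power_Suc2 mult.assoc)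
  finally show ?case .
qed (use assms in simp)

lemma conj_if_intertwines:
  fixes h I J :: "'a::division_ring"
  assumes "h \<noteq> 0" "I * h = h * J"
  shows "I = h * J * inverse h"
proof -
  have "I = I * h * inverse h"
    using assms(1) by (simp add: mult.assoc)
  then show ?thesis
    by (simp only: assms(2))
qed

lemma sq_eq_minus_one_conj_i:
  assumes "I * I = -1"
  obtains h where "h \<noteq> 0" "I = h * of_cplx \<i> * inverse h"
proof (cases "I + of_cplx \<i> = 0")
  case True
  let ?j = "Quat 0 1"
  have "I = - of_cplx \<i>"
    using True by (simp add: eq_neg_iff_add_eq_0)
  then have "?j \<noteq> 0" "I * ?j = ?j * of_cplx \<i>"
    by (auto simp: quat_eq_iff)
  then show ?thesis
    using that conj_if_intertwines by blast
next
  case False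
  have "I * (I + of_cplx \<i>) = (I + of_cplx \<i>) * of_cplx \<i>"
    using assms of_cplx_i_sq by (simp add: algebra_simps)
  then show ?thesis
    using False that conj_if_intertwines by blast
qed

lemma cplx_along_power:
  assumes "I * I = -1"
  shows "cplx_along I z ^ k = cplx_along I (z ^ k)"
proof -
  obtain h where "h \<noteq> 0" "I = h * of_cplx \<i> * inverse h"
    using sq_eq_minus_one_conj_i[OF assms] .
  then show ?thesis
    by (simp add: cplx_along_conj power_conj of_cplx_power)
qed

lemma conjclass_of_cplx: "conjclass (of_cplx z) = {cplx_along I z | I. I * I = -1}"
proof (intro equalityI subsetI)
  fix x assume "x \<in> conjclass (of_cplx z)"
  then obtain h where h: "h \<noteq> 0" "x = h * of_cplx z * inverse h"
    unfolding conjclass_def by blast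
  have "(h * of_cplx \<i> * inverse h) * (h * of_cplx \<i> * inverse h)
        = h * (of_cplx \<i> * of_cplx \<i>) * inverse h"
    using power_conj[OF h(1), of "of_cplx \<i>" 2] by (simp only: power2_eq_square)
  also have "\<dots> = -1"
    using h(1) by (simp add: of_cplx_i_sq)
  finally have "(h * of_cplx \<i> * inverse h) * (h * of_cplx \<i> * inverse h) = -1" .
  moreover have "x = cplx_along (h * of_cplx \<i> * inverse h) z"
    using h by (simp add: cplx_along_conj)
  ultimately show "x \<in> {cplx_along I z | I. I * I = -1}"
    by blast
next
  fix x assume "x \<in> {cplx_along I z | I. I * I = -1}"
  then obtain I where "I * I = -1" "x = cplx_along I z" by blast
  moreover obtain h where "h \<noteq> 0" "I = h * of_cplx \<i> * inverse h"
    using sq_eq_minus_one_conj_i[OF \<open>I * I = -1\<close>] .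
  ultimately have "x = h * of_cplx z * inverse h"
    by (simp add: cplx_along_conj)
  then show "x \<in> conjclass (of_cplx z)"
    unfolding conjclass_def using \<open>h \<noteq> 0\<close> by blast
qed

lemma of_cplx_in_conjclass: "of_cplx z \<in> conjclass (of_cplx z)"
  unfolding conjclass_of_cplx using of_cplx_i_sq by (force simp: cplx_along_i)

lemma of_cplx_cnj_in_conjclass: "of_cplx (cnj z) \<in> conjclass (of_cplx z)"
proof -
  have "of_cplx (cnj z) = cplx_along (- of_cplx \<i>) z"
    by (simp add: cplx_along_minus_i)
  moreover have "(- of_cplx \<i>) * (- of_cplx \<i>) = (-1 :: quat)"
    by (simp add: of_cplx_i_sq)
  ultimately show ?thesis
    unfolding conjclass_of_cplx by (intro CollectI exI[of _ "- of_cplx \<i>"] conjI)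
qed

lemma conjclass_cnj: "conjclass (of_cplx (cnj z)) = conjclass (of_cplx z)"
proof -
  have minus_iff:
    "(\<exists>I. x = cplx_along (- I) z \<and> I * I = -1) \<longleftrightarrow> (\<exists>I. x = cplx_along I z \<and> I * I = -1)" for x
  proof
    assume "\<exists>I. x = cplx_along (- I) z \<and> I * I = -1"
    then obtain I where "x = cplx_along (- I) z" "I * I = -1" by blast
    then show "\<exists>I. x = cplx_along I z \<and> I * I = -1"
      by (intro exI[of _ "- I"]) simp
  next
    assume "\<exists>I. x = cplx_along I z \<and> I * I = -1"
    then obtain I where "x = cplx_along I z" "I * I = -1" by blast
    then show "\<exists>I. x = cplx_along (- I) z \<and> I * I = -1"
      by (intro exI[of _ "- I"]) simp
  qed
  then show ?thesis
    unfolding conjclass_of_cplx cplx_along_cnj set_eq_iff mem_Collect_eq by (intro allI minus_iff)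
qed

lemma conjclass_of_real: "conjclass (of_cplx (of_real r)) = {of_cplx (of_real r)}"
proof -
  have "cplx_along I (of_real r) = of_cplx (of_real r)" for I
    by (simp add: cplx_along_real quat_of_real_def)
  then show ?thesis
    unfolding conjclass_of_cplx using of_cplx_i_sq by (auto intro!: exI[of _ "of_cplx \<i>"])
qed

lemma unit_pure_sq:
  assumes "a\<^sup>2 + (cmod b)\<^sup>2 = 1"
  shows "Quat (\<i> * of_real a) b * Quat (\<i> * of_real a) b = -1"
proof -
  have "b * cnj b + of_real a * of_real a = of_real ((cmod b)\<^sup>2 + a\<^sup>2)"
    unfolding of_real_add complex_norm_square by (simp add: power2_eq_square)
  also have "\<dots> = 1"
    using assms by (simp add: add.commute)
  finally have "b * cnj b + of_real a * of_real a = 1" .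
  then show ?thesis
    by (simp add: quat_eq_iff algebra_simps)
qed

lemma infinite_conjclass:
  assumes "z \<notin> \<real>"
  shows "infinite (conjclass (of_cplx z))"
proof -
  define I :: "real \<Rightarrow> quat" where "I s = Quat (\<i> * of_real s) (of_real (sqrt (1 - s\<^sup>2)))" for s
  have "I s * I s = -1" if "s \<in> {-1..1}" for s
  proof -
    have "s\<^sup>2 \<le> 1"
      using that by (simp add: abs_square_le_1 abs_le_iff)
    then show ?thesis
      unfolding I_def by (intro unit_pure_sq) simp
  qed
  then have "(\<lambda>s. cplx_along (I s) z) ` {-1..1} \<subseteq> conjclass (of_cplx z)"
    unfolding conjclass_of_cplx by blast
  moreover have "inj (\<lambda>s. cplx_along (I s) z)"
  proof
    fix s t assume "cplx_along (I s) z = cplx_along (I t) z"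
    then have "Im z * s = Im z * t"
      by (simp add: quat_eq_iff cplx_along_def I_def complex_eq_iff)
    then show "s = t"
      using assms by (simp add: complex_is_Real_iff)
  qed
  then have "infinite ((\<lambda>s. cplx_along (I s) z) ` {-1..1})"
    by (simp add: finite_image_iff inj_on_subset)
  ultimately show ?thesis
    using finite_subset by blast
qed

section \<open>Polar form\<close>

definition quat_polar :: "quat \<Rightarrow> complex" where
  "quat_polar x = Complex (Re (qfst x)) (sqrt ((Im (qfst x))\<^sup>2 + (cmod (qsnd x))\<^sup>2))"

definition quat_axis :: "quat \<Rightarrow> quat" where
  "quat_axis x =
    (if Im (quat_polar x) = 0 then of_cplx \<i>
     else Quat (\<i> * of_real (Im (qfst x) / Im (quat_polar x))) (qsnd x / of_real (Im (quat_polar x))))"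

lemma Im_quat_polar: "Im (quat_polar x) = sqrt ((Im (qfst x))\<^sup>2 + (cmod (qsnd x))\<^sup>2)"
  by (simp add: quat_polar_def)

lemma Im_quat_polar_eq_0_iff: "Im (quat_polar x) = 0 \<longleftrightarrow> Im (qfst x) = 0 \<and> qsnd x = 0"
  by (simp add: Im_quat_polar add_nonneg_eq_0_iff)

lemma quat_axis_unit:
  obtains a b where "quat_axis x = Quat (\<i> * of_real a) b" "a\<^sup>2 + (cmod b)\<^sup>2 = 1"
proof (cases "Im (quat_polar x) = 0")
  case True
  then show ?thesis
    using that[of 1 0] by (simp add: quat_axis_def of_cplx_def)
next
  case False
  let ?b = "Im (quat_polar x)"
  have "(Im (qfst x) / ?b)\<^sup>2 + (cmod (qsnd x / of_real ?b))\<^sup>2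
        = ((Im (qfst x))\<^sup>2 + (cmod (qsnd x))\<^sup>2) / ?b\<^sup>2"
    by (simp add: power_divide norm_divide add_divide_distrib)
  also have "\<dots> = 1"
    using False by (simp add: Im_quat_polar)
  finally have "(Im (qfst x) / ?b)\<^sup>2 + (cmod (qsnd x / of_real ?b))\<^sup>2 = 1" .
  with False show ?thesis
    by (intro that[of "Im (qfst x) / ?b" "qsnd x / of_real ?b"]) (simp_all add: quat_axis_def)
qed

lemma quat_axis_sq: "quat_axis x * quat_axis x = -1"
  by (metis quat_axis_unit unit_pure_sq)

lemma cplx_along_polar: "cplx_along (quat_axis x) (quat_polar x) = x"
proof (cases "Im (quat_polar x) = 0")
  case True
  then have "Im (qfst x) = 0" "qsnd x = 0"
    by (simp_all add: Im_quat_polar_eq_0_iff)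
  with True show ?thesis
    by (simp add: cplx_along_real quat_eq_iff quat_polar_def complex_eq_iff)
next
  case False
  let ?b = "Im (quat_polar x)"
  have "quat_axis x = Quat (\<i> * of_real (Im (qfst x) / ?b)) (qsnd x / of_real ?b)"
    using False by (simp add: quat_axis_def)
  then have "quat_of_real ?b * quat_axis x = Quat (\<i> * of_real (Im (qfst x))) (qsnd x)"
    using False by (simp add: quat_eq_iff)
  moreover have "Re (quat_polar x) = Re (qfst x)"
    by (simp add: quat_polar_def)
  ultimately show ?thesis
    by (simp add: cplx_along_def quat_eq_iff complex_eq_iff)
qed

lemma in_conjclass_quat_polar: "x \<in> conjclass (of_cplx (quat_polar x))"
  unfolding conjclass_of_cplx using quat_axis_sq[of x] cplx_along_polar[of x, symmetric] by blast

section \<open>Polynomials with coefficients on the left\<close>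

definition lpeval :: "(nat \<Rightarrow> quat) \<Rightarrow> nat \<Rightarrow> quat \<Rightarrow> quat" where
  "lpeval c n x = (\<Sum>i\<le>n. c i * x ^ i)"

definition lp_re :: "(nat \<Rightarrow> quat) \<Rightarrow> nat \<Rightarrow> complex \<Rightarrow> quat" where
  "lp_re c n z = (\<Sum>i\<le>n. c i * quat_of_real (Re (z ^ i)))"

definition lp_im :: "(nat \<Rightarrow> quat) \<Rightarrow> nat \<Rightarrow> complex \<Rightarrow> quat" where
  "lp_im c n z = (\<Sum>i\<le>n. c i * quat_of_real (Im (z ^ i)))"

lemma lpeval_cplx_along:
  assumes "I * I = -1"
  shows "lpeval c n (cplx_along I z) = lp_re c n z + lp_im c n z * I"
proof -
  have "lpeval c n (cplx_along I z) = (\<Sum>i\<le>n. c i * cplx_along I (z ^ i))"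
    by (simp add: lpeval_def cplx_along_power[OF assms])
  also have "\<dots> = lp_re c n z + lp_im c n z * I"
    by (simp add: cplx_along_def lp_re_def lp_im_def distrib_left sum.distrib
        sum_distrib_right mult.assoc)
  finally show ?thesis .
qed

lemma lpeval_of_cplx: "lpeval c n (of_cplx z) = lp_re c n z + lp_im c n z * of_cplx \<i>"
  using lpeval_cplx_along[OF of_cplx_i_sq] by (simp add: cplx_along_i)

lemma lpeval_of_cplx_cnj: "lpeval c n (of_cplx (cnj z)) = lp_re c n z - lp_im c n z * of_cplx \<i>"
proof -
  have "(- of_cplx \<i>) * (- of_cplx \<i>) = (-1 :: quat)"
    by (simp add: of_cplx_i_sq)
  from lpeval_cplx_along[OF this] show ?thesis
    by (simp add: cplx_along_minus_i)
qed

lemma lp_re_im_eq_0_iff: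
  "lp_re c n z = 0 \<and> lp_im c n z = 0 \<longleftrightarrow>
     lpeval c n (of_cplx z) = 0 \<and> lpeval c n (of_cplx (cnj z)) = 0"
  (is "?U = 0 \<and> ?V = 0 \<longleftrightarrow> _")
proof
  assume "lpeval c n (of_cplx z) = 0 \<and> lpeval c n (of_cplx (cnj z)) = 0"
  then have plus: "?U + ?V * of_cplx \<i> = 0" and minus: "?U - ?V * of_cplx \<i> = 0"
    by (simp_all only: lpeval_of_cplx[symmetric] lpeval_of_cplx_cnj[symmetric])
  have "?U = - (?V * of_cplx \<i>)"
    using plus by (simp only: add_eq_0_iff2)
  moreover have "?U = ?V * of_cplx \<i>"
    using minus by simp
  ultimately have "?V * of_cplx \<i> = 0"
    by (simp add: quat_eq_iff)
  then show "?U = 0 \<and> ?V = 0"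
    using \<open>?U = ?V * of_cplx \<i>\<close> by simp
qed (simp only: lpeval_of_cplx_cnj lpeval_of_cplx[of c n z] mult_zero_left diff_zero add_0_right)

lemma lpeval_vanishes_on_conjclass:
  assumes "lpeval c n (of_cplx z) = 0" "lpeval c n (of_cplx (cnj z)) = 0"
    and "x \<in> conjclass (of_cplx z)"
  shows "lpeval c n x = 0"
proof -
  obtain I where "I * I = -1" "x = cplx_along I z"
    using assms(3) unfolding conjclass_of_cplx by blast
  then show ?thesis
    using assms(1,2) lp_re_im_eq_0_iff[of c n z] by (simp add: lpeval_cplx_along)
qed

lemma lpeval_root_cases:
  assumes "lpeval c n x = 0"
  obtains (conj_pair) "lpeval c n (of_cplx (quat_polar x)) = 0"
      "lpeval c n (of_cplx (cnj (quat_polar x))) = 0"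
  | (axis) "lp_im c n (quat_polar x) \<noteq> 0"
      "quat_axis x = - (inverse (lp_im c n (quat_polar x)) * lp_re c n (quat_polar x))"
proof -
  let ?U = "lp_re c n (quat_polar x)" and ?V = "lp_im c n (quat_polar x)"
  have UV: "?U + ?V * quat_axis x = 0"
    using assms lpeval_cplx_along[OF quat_axis_sq[of x], of c n "quat_polar x"]
    by (simp add: cplx_along_polar)
  show ?thesis
  proof (cases "?V = 0")
    case True
    with UV show ?thesis
      using lp_re_im_eq_0_iff[of c n "quat_polar x"] by (intro conj_pair) simp_all
  next
    case False
    then have "quat_axis x = inverse ?V * (?V * quat_axis x)"
      by (simp add: mult.assoc[symmetric])
    also have "?V * quat_axis x = - ?U"
      using UV by (simp only: add_eq_0_iff)
    finally show ?thesis
      using False axis by simp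
  qed
qed

lemma lp_re_of_cplx: "lp_re (\<lambda>i. of_cplx (a i)) n z = of_cplx (\<Sum>i\<le>n. a i * of_real (Re (z ^ i)))"
  and lp_im_of_cplx: "lp_im (\<lambda>i. of_cplx (a i)) n z = of_cplx (\<Sum>i\<le>n. a i * of_real (Im (z ^ i)))"
  by (simp_all add: lp_re_def lp_im_def of_cplx_sum quat_of_real_def)

lemma lpeval_complex_coeffs_root_cases:
  assumes "lpeval (\<lambda>i. of_cplx (a i)) n x = 0"
  shows "x \<in> range of_cplx \<or>
    lpeval (\<lambda>i. of_cplx (a i)) n (of_cplx (quat_polar x)) = 0 \<and>
    lpeval (\<lambda>i. of_cplx (a i)) n (of_cplx (cnj (quat_polar x))) = 0"
  using assms
proof (cases rule: lpeval_root_cases)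
  case axis
  then obtain u where "quat_axis x = of_cplx u"
    by (simp add: lp_re_of_cplx lp_im_of_cplx flip: of_cplx_inverse of_cplx_simps)
  then have "x = of_cplx (of_real (Re (quat_polar x)) + of_real (Im (quat_polar x)) * u)"
    using cplx_along_polar[of x] by (simp add: cplx_along_of_cplx)
  then show ?thesis
    by blast
qed simp

lemma qeval_eq_lpeval: "qeval q = lpeval (\<lambda>i. of_cplx (coeff q i)) (degree q)"
  by (simp add: fun_eq_iff qeval_def lpeval_def)

lemma qeval_of_cplx: "qeval q (of_cplx w) = of_cplx (poly q w)"
  by (simp add: qeval_def poly_altdef of_cplx_sum of_cplx_power)

lemma qeval_roots:
  "{x. qeval q x = 0} = of_cplx ` {w. poly q w = 0}
     \<union> (\<Union>z\<in>{z. poly q z = 0 \<and> poly q (cnj z) = 0}. conjclass (of_cplx z))"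
proof -
  let ?P = "lpeval (\<lambda>i. of_cplx (coeff q i)) (degree q)"
  have P_of_cplx: "?P (of_cplx w) = of_cplx (poly q w)" for w
    unfolding qeval_eq_lpeval[symmetric] by (rule qeval_of_cplx)
  have "?P x = 0 \<longleftrightarrow> x \<in> of_cplx ` {w. poly q w = 0}
      \<union> (\<Union>z\<in>{z. poly q z = 0 \<and> poly q (cnj z) = 0}. conjclass (of_cplx z))" for x
  proof
    assume "?P x = 0"
    then consider (complex) w where "x = of_cplx w"
      | (conj_pair) "?P (of_cplx (quat_polar x)) = 0" "?P (of_cplx (cnj (quat_polar x))) = 0"
      using lpeval_complex_coeffs_root_cases by blast
    then show "x \<in> of_cplx ` {w. poly q w = 0}
        \<union> (\<Union>z\<in>{z. poly q z = 0 \<and> poly q (cnj z) = 0}. conjclass (of_cplx z))"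
    proof cases
      case complex
      with \<open>?P x = 0\<close> show ?thesis
        by (simp add: P_of_cplx)
    next
      case conj_pair
      then show ?thesis
        using in_conjclass_quat_polar[of x] by (auto simp: P_of_cplx)
    qed
  next
    assume "x \<in> of_cplx ` {w. poly q w = 0}
        \<union> (\<Union>z\<in>{z. poly q z = 0 \<and> poly q (cnj z) = 0}. conjclass (of_cplx z))"
    then consider (complex) w where "x = of_cplx w" "poly q w = 0"
      | (conj_pair) z where "poly q z = 0" "poly q (cnj z) = 0" "x \<in> conjclass (of_cplx z)"
      by blast
    then show "?P x = 0"
    proof cases
      case conj_pair
      show ?thesis
        by (rule lpeval_vanishes_on_conjclass[of _ _ z]) (use conj_pair in \<open>simp_all add: P_of_cplx\<close>)
    qed (simp add: P_of_cplx)
  qed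
  then show ?thesis
    unfolding qeval_eq_lpeval by (simp only: Collect_mem_eq)
qed

lemma qeval_roots_listed:
  assumes eta: "\<forall>z\<in>set eta. poly q (cnj z) \<noteq> 0"
    and roots: "{z. poly q z = 0} = of_real ` set xi \<union> set eta \<union> set zeta \<union> cnj ` set zeta"
  shows "{x. qeval q x = 0} =
    (of_cplx \<circ> of_real) ` set xi \<union> of_cplx ` set eta \<union> (\<Union>z\<in>set zeta. conjclass (of_cplx z))"
proof -
  have root_iff: "poly q w = 0 \<longleftrightarrow> w \<in> of_real ` set xi \<union> set eta \<union> set zeta \<union> cnj ` set zeta"
    for w using roots by blast
  have "{z. poly q z = 0 \<and> poly q (cnj z) = 0} = of_real ` set xi \<union> set zeta \<union> cnj ` set zeta"
  proof (intro equalityI subsetI)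
    fix z assume "z \<in> {z. poly q z = 0 \<and> poly q (cnj z) = 0}"
    then show "z \<in> of_real ` set xi \<union> set zeta \<union> cnj ` set zeta"
      using eta unfolding root_iff by blast
  next
    fix z assume "z \<in> of_real ` set xi \<union> set zeta \<union> cnj ` set zeta"
    then show "z \<in> {z. poly q z = 0 \<and> poly q (cnj z) = 0}"
      unfolding root_iff by force
  qed
  then have "(\<Union>z\<in>{z. poly q z = 0 \<and> poly q (cnj z) = 0}. conjclass (of_cplx z))
      = (of_cplx \<circ> of_real) ` set xi \<union> (\<Union>z\<in>set zeta. conjclass (of_cplx z))"
    by (simp add: conjclass_of_real conjclass_cnj UNION_singleton_eq_range)
  moreover have "of_cplx ` {w. poly q w = 0} = (of_cplx \<circ> of_real) ` set xi \<union> of_cplx ` set eta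
      \<union> (of_cplx ` set zeta \<union> of_cplx ` cnj ` set zeta)"
    unfolding roots by (simp add: image_Un image_comp Un_assoc)
  moreover have "of_cplx ` set zeta \<union> of_cplx ` cnj ` set zeta
      \<subseteq> (\<Union>z\<in>set zeta. conjclass (of_cplx z))"
    using of_cplx_in_conjclass of_cplx_cnj_in_conjclass by blast
  moreover have "A \<union> B \<union> D \<union> (A \<union> C) = A \<union> B \<union> C" if "D \<subseteq> C" for A B C D :: "quat set"
    using that by blast
  ultimately show ?thesis
    unfolding qeval_roots by simp
qed

section \<open>Finiteness of the root set\<close>

definition lp_fst :: "(nat \<Rightarrow> quat) \<Rightarrow> nat \<Rightarrow> complex poly" where
  "lp_fst c n = (\<Sum>i\<le>n. monom (qfst (c i)) i)"

definition lp_snd :: "(nat \<Rightarrow> quat) \<Rightarrow> nat \<Rightarrow> complex poly" where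
  "lp_snd c n = (\<Sum>i\<le>n. monom (qsnd (c i)) i)"

lemma lpeval_of_cplx_components:
  "lpeval c n (of_cplx z) = Quat (poly (lp_fst c n) z) (poly (lp_snd c n) (cnj z))"
  by (simp add: quat_eq_iff lpeval_def lp_fst_def lp_snd_def qfst_sum qsnd_sum poly_sum
      poly_monom flip: of_cplx_power)

lemma coeff_lp_fst: "coeff (lp_fst c n) m = (if m \<le> n then qfst (c m) else 0)"
  and coeff_lp_snd: "coeff (lp_snd c n) m = (if m \<le> n then qsnd (c m) else 0)"
  by (simp_all add: lp_fst_def lp_snd_def coeff_sum)

text \<open>With \<open>f\<^sub>1 = lp_fst c n\<close> and \<open>f\<^sub>2 = lp_snd c n\<close> (the derived polynomials) this is
  \<open>f\<^sub>1 f\<^sub>1\<^sup>* + f\<^sub>2 f\<^sub>2\<^sup>*\<close>; on the real axis it equals \<open>\<bar>f\<^sub>1\<bar>\<^sup>2 + \<bar>f\<^sub>2\<bar>\<^sup>2\<close>.\<close>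
definition lp_norm_poly :: "(nat \<Rightarrow> quat) \<Rightarrow> nat \<Rightarrow> complex poly" where
  "lp_norm_poly c n = lp_fst c n * map_poly cnj (lp_fst c n) + lp_snd c n * map_poly cnj (lp_snd c n)"

lemma poly_eq_0_if_vanishes_on_reals:
  fixes p :: "complex poly"
  assumes "\<And>r. poly p (of_real r) = 0"
  shows "p = 0"
proof (rule ccontr)
  assume "p \<noteq> 0"
  then have "finite {x. poly p x = 0}"
    by (rule poly_roots_finite)
  moreover have "range complex_of_real \<subseteq> {x. poly p x = 0}"
    using assms by auto
  moreover have "infinite (range complex_of_real)"
    using finite_imageD[of complex_of_real UNIV] infinite_UNIV_char_0 by (auto simp: inj_on_def)
  ultimately show False
    using finite_subset by blast
qed

lemma lp_norm_poly_nonzero: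
  assumes "m \<le> n" "c m \<noteq> 0"
  shows "lp_norm_poly c n \<noteq> 0"
proof
  assume norm_0: "lp_norm_poly c n = 0"
  have "poly (lp_fst c n) (of_real r) = 0 \<and> poly (lp_snd c n) (of_real r) = 0" for r
  proof -
    let ?a = "poly (lp_fst c n) (of_real r)" and ?b = "poly (lp_snd c n) (of_real r)"
    have "of_real ((cmod ?a)\<^sup>2 + (cmod ?b)\<^sup>2) = poly (lp_norm_poly c n) (of_real r)"
      unfolding of_real_add complex_norm_square by (simp add: lp_norm_poly_def)
    then have "of_real ((cmod ?a)\<^sup>2 + (cmod ?b)\<^sup>2) = (0 :: complex)"
      by (simp only: norm_0 poly_0)
    then have "(cmod ?a)\<^sup>2 + (cmod ?b)\<^sup>2 = 0"
      by (simp only: of_real_eq_0_iff)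
    then show ?thesis
      by (simp add: add_nonneg_eq_0_iff)
  qed
  then have "lp_fst c n = 0" "lp_snd c n = 0"
    using poly_eq_0_if_vanishes_on_reals by blast+
  then have "qfst (c m) = 0" "qsnd (c m) = 0"
    using assms(1) coeff_lp_fst[of c n m] coeff_lp_snd[of c n m] by simp_all
  then show False
    using assms(2) by (simp add: quat_eq_iff)
qed

text \<open>For \<open>U, V\<close> as in \<open>lpeval_cplx_along\<close>, the left-hand side is \<open>lp_norm_poly c n\<close> at \<open>z\<close>.\<close>
lemma conjugate_pair_identity:
  assumes "U + V * Quat (\<i> * of_real a) b = 0" and "a\<^sup>2 + (cmod b)\<^sup>2 = 1"
  shows "qfst (U + V * of_cplx \<i>) * cnj (qfst (U - V * of_cplx \<i>))
       + qsnd (U - V * of_cplx \<i>) * cnj (qsnd (U + V * of_cplx \<i>)) = 0"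
proof -
  have b: "b * cnj b = 1 - of_real a * of_real a"
    using unit_pure_sq[OF assms(2)] by (simp add: quat_eq_iff algebra_simps)
  obtain u1 u2 v1 v2 where UV: "U = Quat u1 u2" "V = Quat v1 v2"
    by (meson quat.exhaust)
  have "u1 + (v1 * (\<i> * of_real a) - v2 * cnj b) = 0" "u2 + (v1 * b - v2 * (\<i> * of_real a)) = 0"
    using assms(1) unfolding UV by (simp_all add: quat_eq_iff)
  then have u1: "u1 = - (v1 * (\<i> * of_real a) - v2 * cnj b)"
    and u2: "u2 = - (v1 * b - v2 * (\<i> * of_real a))"
    by (simp_all only: eq_neg_iff_add_eq_0)
  have "qfst (U + V * of_cplx \<i>) * cnj (qfst (U - V * of_cplx \<i>))
       + qsnd (U - V * of_cplx \<i>) * cnj (qsnd (U + V * of_cplx \<i>))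
      = (v1 * cnj v1 + v2 * cnj v2) * (b * cnj b - (1 - of_real a * of_real a))"
    unfolding UV by (simp add: u1 u2 algebra_simps)
  also have "\<dots> = 0"
    using b by simp
  finally show ?thesis .
qed

lemma lp_norm_poly_root:
  assumes "lpeval c n x = 0"
  shows "poly (lp_norm_poly c n) (quat_polar x) = 0"
proof -
  let ?w = "quat_polar x"
  obtain a b where ab: "quat_axis x = Quat (\<i> * of_real a) b" "a\<^sup>2 + (cmod b)\<^sup>2 = 1"
    using quat_axis_unit by blast
  have "lp_re c n ?w + lp_im c n ?w * quat_axis x = 0"
    using assms lpeval_cplx_along[OF quat_axis_sq[of x], of c n ?w]
    by (simp add: cplx_along_polar)
  from conjugate_pair_identity[OF this[unfolded ab(1)] ab(2)]
  show ?thesis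
    unfolding lpeval_of_cplx[symmetric] lpeval_of_cplx_cnj[symmetric] lpeval_of_cplx_components
    by (simp add: lp_norm_poly_def)
qed

lemma inj_on_quat_polar_roots:
  assumes no_pair: "\<not> (\<exists>w. w \<notin> \<real> \<and> lpeval c n (of_cplx w) = 0 \<and> lpeval c n (of_cplx (cnj w)) = 0)"
  shows "inj_on quat_polar {x. lpeval c n x = 0}"
proof (rule inj_onI)
  fix x y
  assume x: "x \<in> {x. lpeval c n x = 0}" and y: "y \<in> {x. lpeval c n x = 0}"
    and polar: "quat_polar x = quat_polar y"
  show "x = y"
  proof (cases "Im (quat_polar x) = 0")
    case True
    then show ?thesis
      using polar cplx_along_polar[of x] cplx_along_polar[of y] by (metis cplx_along_real)
  next
    case False
    let ?w = "quat_polar x"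
    have axis: "quat_axis v = - (inverse (lp_im c n ?w) * lp_re c n ?w)"
      if "lpeval c n v = 0" "quat_polar v = ?w" for v
      using that(1)
    proof (cases rule: lpeval_root_cases)
      case conj_pair
      then show ?thesis
        using no_pair False that(2) by (auto simp: complex_is_Real_iff)
    qed (use that(2) in simp)
    have "quat_axis x = quat_axis y"
      using axis x y polar by simp
    then show ?thesis
      using cplx_along_polar[of x] cplx_along_polar[of y] polar by metis
  qed
qed

lemma finite_lpeval_roots_iff:
  assumes "m \<le> n" "c m \<noteq> 0"
  shows "finite {x. lpeval c n x = 0} \<longleftrightarrow>
    \<not> (\<exists>w. w \<notin> \<real> \<and> lpeval c n (of_cplx w) = 0 \<and> lpeval c n (of_cplx (cnj w)) = 0)"
proof
  assume finite_roots: "finite {x. lpeval c n x = 0}"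
  show "\<not> (\<exists>w. w \<notin> \<real> \<and> lpeval c n (of_cplx w) = 0 \<and> lpeval c n (of_cplx (cnj w)) = 0)"
  proof
    assume "\<exists>w. w \<notin> \<real> \<and> lpeval c n (of_cplx w) = 0 \<and> lpeval c n (of_cplx (cnj w)) = 0"
    then obtain w where w: "w \<notin> \<real>" "lpeval c n (of_cplx w) = 0" "lpeval c n (of_cplx (cnj w)) = 0"
      by blast
    then have "conjclass (of_cplx w) \<subseteq> {x. lpeval c n x = 0}"
      using lpeval_vanishes_on_conjclass by blast
    then show False
      using finite_roots infinite_conjclass[OF w(1)] finite_subset by blast
  qed
next
  assume no_pair: "\<not> (\<exists>w. w \<notin> \<real> \<and> lpeval c n (of_cplx w) = 0 \<and> lpeval c n (of_cplx (cnj w)) = 0)"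
  have "{x. lpeval c n x = 0}
      \<subseteq> quat_polar -` {w. poly (lp_norm_poly c n) w = 0} \<inter> {x. lpeval c n x = 0}"
    using lp_norm_poly_root by blast
  moreover have "finite (quat_polar -` {w. poly (lp_norm_poly c n) w = 0} \<inter> {x. lpeval c n x = 0})"
    using assms no_pair
    by (intro finite_vimage_IntI poly_roots_finite lp_norm_poly_nonzero inj_on_quat_polar_roots)
  ultimately show "finite {x. lpeval c n x = 0}"
    by (rule finite_subset)
qed

section \<open>The derived polynomials\<close>

lemma lpeval_fun_upd_0: "lpeval (p(0 := a)) n x = (\<Sum>i=1..n. p i * x ^ i) + a"
proof -
  have "lpeval (p(0 := a)) n x = a + (\<Sum>i=Suc 0..n. (p(0 := a)) i * x ^ i)"
    unfolding lpeval_def atMost_atLeast0 by (simp add: sum.atLeast_Suc_atMost)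
  also have "(\<Sum>i=Suc 0..n. (p(0 := a)) i * x ^ i) = (\<Sum>i=1..n. p i * x ^ i)"
    by (rule sum.cong) auto
  finally show ?thesis
    by (simp only: add.commute)
qed

lemma derived_polys_of_cplx:
  "(\<Sum>i=1..n. p i * of_cplx z ^ i) + of_cplx (of_real d0)
     = Quat (poly (derived_f1 n p d0) z) (poly (derived_f2 n p) (cnj z))"
  by (simp add: quat_eq_iff derived_f1_def derived_f2_def poly_sum poly_monom qfst_sum qsnd_sum
      flip: of_cplx_power)

lemma poly_derived_f1bar: "poly (derived_f1bar n p d0) z = cnj (poly (derived_f1 n p d0) (cnj z))"
  and poly_derived_f2bar: "poly (derived_f2bar n p) z = cnj (poly (derived_f2 n p) (cnj z))"
  by (simp_all add: derived_f1bar_def derived_f1_def derived_f2bar_def derived_f2_def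
      poly_sum poly_monom)

lemma finite_roots_iff_derived_polys:
  assumes "1 \<le> n" "p n \<noteq> 0"
  shows "finite {x. (\<Sum>i=1..n. p i * x ^ i) + of_cplx (of_real d0) = 0} \<longleftrightarrow>
    \<not> (\<exists>w. w \<notin> \<real> \<and> poly (derived_f1 n p d0) w = 0 \<and> poly (derived_f2 n p) w = 0 \<and>
           poly (derived_f1 n p d0) (cnj w) = 0 \<and> poly (derived_f2 n p) (cnj w) = 0)"
proof -
  define c where "c = p(0 := of_cplx (of_real d0))"
  have roots: "{x. (\<Sum>i=1..n. p i * x ^ i) + of_cplx (of_real d0) = 0} = {x. lpeval c n x = 0}"
    by (simp add: c_def lpeval_fun_upd_0)
  have root_iff: "lpeval c n (of_cplx w) = 0 \<longleftrightarrow>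
      poly (derived_f1 n p d0) w = 0 \<and> poly (derived_f2 n p) (cnj w) = 0" for w
    unfolding c_def lpeval_fun_upd_0 derived_polys_of_cplx by (simp add: quat_eq_iff)
  have "finite {x. lpeval c n x = 0} \<longleftrightarrow>
      \<not> (\<exists>w. w \<notin> \<real> \<and> lpeval c n (of_cplx w) = 0 \<and> lpeval c n (of_cplx (cnj w)) = 0)"
    using assms by (intro finite_lpeval_roots_iff[of n]) (simp_all add: c_def)
  then show ?thesis
    unfolding roots root_iff by (simp add: conj_commute conj_left_commute)
qed

lemma poly_gcd_eq_0_iff:
  fixes f g :: "'a::field_gcd poly"
  shows "poly (gcd f g) z = 0 \<longleftrightarrow> poly f z = 0 \<and> poly g z = 0"
  by (simp add: poly_eq_0_iff_dvd)

theorem corollary3: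
  shows
   "(\<forall>(q::complex poly) (xi::real list) (zeta::complex list).
       q \<noteq> 0 \<and> (\<forall>i. coeff q i \<in> \<real>) \<and>
       distinct xi \<and> distinct (zeta @ map cnj zeta) \<and> (\<forall>z\<in>set zeta. z \<notin> \<real>) \<and>
       {z. poly q z = 0} = of_real ` set xi \<union> set zeta \<union> cnj ` set zeta
     \<longrightarrow> {x. qeval q x = 0} =
           (of_cplx \<circ> of_real) ` set xi \<union> (\<Union>z\<in>set zeta. conjclass (of_cplx z)))
  \<and> (\<forall>(q::complex poly) (xi::real list) (eta::complex list) (zeta::complex list).
       q \<noteq> 0 \<and>
       distinct xi \<and> distinct (eta @ zeta @ map cnj zeta) \<and>
       (\<forall>z\<in>set eta \<union> set zeta. z \<notin> \<real>) \<and>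
       (\<forall>z\<in>set eta. poly q (cnj z) \<noteq> 0) \<and>
       {z. poly q z = 0} = of_real ` set xi \<union> set eta \<union> set zeta \<union> cnj ` set zeta
     \<longrightarrow> {x. qeval q x = 0} =
           (of_cplx \<circ> of_real) ` set xi \<union> of_cplx ` set eta
             \<union> (\<Union>z\<in>set zeta. conjclass (of_cplx z)))
  \<and> (\<forall>(n::nat) (p::nat \<Rightarrow> quat) (d0::real).
       1 \<le> n \<and> p n \<noteq> 0 \<and> d0 \<in> {0, 1} \<longrightarrow>
       (finite {x::quat. (\<Sum>i=1..n. p i * x ^ i) + of_cplx (of_real d0) = 0}
          \<longleftrightarrow> \<not> (\<exists>c. c \<notin> \<real> \<and>
                 poly (gcd (gcd (derived_f1 n p d0) (derived_f2 n p))
                           (gcd (derived_f1bar n p d0) (derived_f2bar n p))) c = 0))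
       \<and> (finite {x::quat. (\<Sum>i=1..n. p i * x ^ i) + of_cplx (of_real d0) = 0}
          \<longleftrightarrow> \<not> (\<exists>c. c \<notin> \<real> \<and>
                 poly (gcd (derived_f1 n p d0) (derived_f2 n p)) c = 0 \<and>
                 poly (gcd (derived_f1 n p d0) (derived_f2 n p)) (cnj c) = 0)))"
  \<comment> \<open>Only the shape of the complex root set is used: \<open>q \<noteq> 0\<close>, real coefficients, distinctness,
    nonreality and \<open>d0 \<in> {0, 1}\<close> are not needed.\<close>
  apply (intro conjI allI impI)
  subgoal for q xi zeta
    using qeval_roots_listed[of "[]" q xi zeta] by simp
  subgoal for q xi eta zeta
    using qeval_roots_listed[of eta q xi zeta] by blast
  subgoal for n p d0
    using finite_roots_iff_derived_polys[of n p d0]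
    by (simp add: poly_gcd_eq_0_iff poly_derived_f1bar poly_derived_f2bar conj_commute conj_left_commute)
  subgoal for n p d0
    using finite_roots_iff_derived_polys[of n p d0] by (simp add: poly_gcd_eq_0_iff conj_commute conj_left_commute)
  done

end
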